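(* Let $\mathcal{B}=\{l\le l_0\}$ be a regular spherically symmetric ball of initial data (no asymptotic assumption) on which the dominant energy condition $\mu\ge|j|$ holds. If on the boundary sphere $\partial\mathcal{B}=\{l=l_0\}$ one has $\theta^->0$ and $\theta^+>0$, then the Misner–Sharp energy of the boundary is non-negative: $\mathcal{E}(l_0)\ge 0$.
   Context: Regular spherically symmetric data: metric $h=dl^2+r(l)^2(d\theta^2+\sin^2\theta\,d\phi^2)$ on the ball with $r$ smooth, $r(0)=0$, $r'(0)=1$; second fundamental form $K_{ij}=n_in_jK_l+(h_{ij}-n_in_j)K_r$ with $n=\partial_l$; constraints $K_r(K_r+2K_l)-\frac1{r^2}(r'^2+2rr''-1)=8\pi\mu$ and $K_r'+\frac{r'}{r}(K_r-K_l)=4\pi j$. Null expansions $\theta^\pm=\frac2r(r'\pm K_r r)$. Misner–Sharp energy $\mathcal{E}(l)=\frac{r}{2}\bigl(1-\frac{r^2}{4}\theta^+\theta^-\bigr)$. *)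

theory Defs
  imports "HOL-Analysis.Analysis"
begin

definition smooth_on :: "real set \<Rightarrow> (real \<Rightarrow> real) \<Rightarrow> bool" where
  "smooth_on S f \<longleftrightarrow> (\<exists>D :: nat \<Rightarrow> real \<Rightarrow> real.
      (\<forall>x\<in>S. D 0 x = f x) \<and>
      (\<forall>n. \<forall>x\<in>S. (D n has_real_derivative D (Suc n) x) (at x within S)))"

definition theta_plus :: "real \<Rightarrow> real \<Rightarrow> real \<Rightarrow> real" where
  "theta_plus r dr Kr = 2 / r * (dr + Kr * r)"

definition theta_minus :: "real \<Rightarrow> real \<Rightarrow> real \<Rightarrow> real" where
  "theta_minus r dr Kr = 2 / r * (dr - Kr * r)"

definition misner_sharp :: "real \<Rightarrow> real \<Rightarrow> real \<Rightarrow> real" where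
  "misner_sharp r dr Kr =
     r / 2 * (1 - r^2 / 4 * theta_plus r dr Kr * theta_minus r dr Kr)"

end

theory Submission
  imports Defs
begin

text \<open>Cleared of denominators, the Misner--Sharp energy is
  \<open>\<E> = r/2 (1 - r'\<^sup>2 + K\<^sub>r\<^sup>2 r\<^sup>2)\<close>. On the part of the ball outside the last sphere where
  \<open>r' = |K\<^sub>r r|\<close> (i.e. where \<open>\<theta>\<^sup>+\<close> or \<open>\<theta>\<^sup>-\<close> vanishes), the constraints give
  \<open>\<E>' = 4\<pi> r\<^sup>2 (\<mu> r' + j K\<^sub>r r) \<ge> 4\<pi> r\<^sup>2 |j| (r' - |K\<^sub>r r|) \<ge> 0\<close> by the dominant energy
  condition. On that last sphere \<open>\<E> = r/2 \<ge> 0\<close>, and if there is none, \<open>\<E>\<close> starts from \<open>0\<close>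
  at the centre; so \<open>\<E>\<close> is non-negative on the boundary.\<close>

text \<open>Also valid at \<open>r = 0\<close>, where both sides vanish (the left one because \<open>x / 0 = 0\<close>).\<close>
lemma misner_sharp_eq: "misner_sharp r dr Kr = r / 2 * (1 - dr\<^sup>2 + (Kr * r)\<^sup>2)"
  by (cases "r = 0") (simp_all add: misner_sharp_def theta_plus_def theta_minus_def
      field_simps power2_eq_square)

lemma misner_sharp_eq_half_radius:
  assumes "dr = \<bar>Kr * r\<bar>"
  shows "misner_sharp r dr Kr = r / 2"
  using assms by (simp add: misner_sharp_eq)

lemma theta_plus_minus_pos_iff:
  assumes "r > 0"
  shows "theta_plus r dr Kr > 0 \<and> theta_minus r dr Kr > 0 \<longleftrightarrow> dr > \<bar>Kr * r\<bar>"
  using assms by (auto simp: theta_plus_def theta_minus_def zero_less_divide_iff abs_if)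

lemma misner_sharp_has_real_derivative:
  fixes r dr ddr Kl Kr dKr mu j :: "real \<Rightarrow> real"
  assumes "(r has_real_derivative dr x) (at x)"
    and "(dr has_real_derivative ddr x) (at x)"
    and "(Kr has_real_derivative dKr x) (at x)"
    and r_pos: "r x > 0"
    and hamiltonian:
      "Kr x * (Kr x + 2 * Kl x) - (dr x ^ 2 + 2 * r x * ddr x - 1) / r x ^ 2 = 8 * pi * mu x"
    and momentum: "dKr x + dr x / r x * (Kr x - Kl x) = 4 * pi * j x"
  shows "((\<lambda>l. misner_sharp (r l) (dr l) (Kr l)) has_real_derivative
           4 * pi * r x ^ 2 * (mu x * dr x + j x * Kr x * r x)) (at x)"
proof -
  have mu: "8 * pi * mu x * r x ^ 2 = Kr x * (Kr x + 2 * Kl x) * r x ^ 2 - (dr x ^ 2 + 2 * r x * ddr x - 1)"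
    using hamiltonian r_pos by (simp add: field_simps)
  have j: "4 * pi * j x * r x = dKr x * r x + dr x * (Kr x - Kl x)"
    using momentum r_pos by (simp add: field_simps)
  have "((\<lambda>l. r l / 2 * (1 - (dr l)\<^sup>2 + (Kr l * r l)\<^sup>2)) has_real_derivative
      dr x / 2 * (1 - dr x ^ 2 + (Kr x * r x) ^ 2)
      + r x / 2 * (- (2 * dr x * ddr x) + 2 * (Kr x * r x) * (dKr x * r x + Kr x * dr x))) (at x)"
    by (rule derivative_eq_intros assms refl | simp)+
  also have "dr x / 2 * (1 - dr x ^ 2 + (Kr x * r x) ^ 2)
      + r x / 2 * (- (2 * dr x * ddr x) + 2 * (Kr x * r x) * (dKr x * r x + Kr x * dr x))
      = dr x / 2 * (8 * pi * mu x * r x ^ 2) + Kr x * r x ^ 2 * (4 * pi * j x * r x)"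
    unfolding mu j by (simp add: algebra_simps power2_eq_square)
  also have "\<dots> = 4 * pi * r x ^ 2 * (mu x * dr x + j x * Kr x * r x)"
    by (simp add: algebra_simps power2_eq_square)
  finally show ?thesis
    unfolding misner_sharp_eq .
qed

lemma energy_flux_nonneg:
  fixes mu j dr Kr r :: real
  assumes "mu \<ge> \<bar>j\<bar>" and "dr > \<bar>Kr * r\<bar>"
  shows "mu * dr + j * Kr * r \<ge> 0"
proof -
  have "- (j * Kr * r) \<le> \<bar>j\<bar> * \<bar>Kr * r\<bar>"
    by (metis abs_ge_minus_self abs_mult mult.assoc)
  also have "\<dots> \<le> \<bar>j\<bar> * dr"
    using assms(2) by (intro mult_left_mono) auto
  also have "\<dots> \<le> mu * dr"
    using assms by (intro mult_right_mono) auto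
  finally show ?thesis by linarith
qed

lemma misner_sharp_nondecreasing:
  fixes c b :: real and r dr ddr Kl Kr dKr mu j :: "real \<Rightarrow> real"
  assumes "c \<le> b"
    and "continuous_on {c..b} r" "continuous_on {c..b} dr" "continuous_on {c..b} Kr"
    and deriv: "\<And>l. l \<in> {c<..<b} \<Longrightarrow>
          (r has_real_derivative dr l) (at l) \<and> (dr has_real_derivative ddr l) (at l) \<and>
          (Kr has_real_derivative dKr l) (at l)"
    and r_pos: "\<And>l. l \<in> {c<..<b} \<Longrightarrow> r l > 0"
    and hamiltonian: "\<And>l. l \<in> {c<..<b} \<Longrightarrow>
          Kr l * (Kr l + 2 * Kl l) - (dr l ^ 2 + 2 * r l * ddr l - 1) / r l ^ 2 = 8 * pi * mu l"
    and momentum: "\<And>l. l \<in> {c<..<b} \<Longrightarrow>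
          dKr l + dr l / r l * (Kr l - Kl l) = 4 * pi * j l"
    and dec: "\<And>l. l \<in> {c<..<b} \<Longrightarrow> mu l \<ge> \<bar>j l\<bar>"
    and untrapped: "\<And>l. l \<in> {c<..<b} \<Longrightarrow> dr l > \<bar>Kr l * r l\<bar>"
  shows "misner_sharp (r c) (dr c) (Kr c) \<le> misner_sharp (r b) (dr b) (Kr b)"
proof (rule DERIV_nonneg_imp_increasing_open[where f = "\<lambda>l. misner_sharp (r l) (dr l) (Kr l)"])
  fix l assume "c < l" "l < b"
  then have l: "l \<in> {c<..<b}" by simp
  have "((\<lambda>l. misner_sharp (r l) (dr l) (Kr l)) has_real_derivative
          4 * pi * r l ^ 2 * (mu l * dr l + j l * Kr l * r l)) (at l)"
    using deriv[OF l] r_pos[OF l] hamiltonian[OF l] momentum[OF l]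
    by (intro misner_sharp_has_real_derivative[where Kl = Kl]) auto
  moreover have "4 * pi * r l ^ 2 * (mu l * dr l + j l * Kr l * r l) \<ge> 0"
    using energy_flux_nonneg[OF dec untrapped, OF l l] by simp
  ultimately show "\<exists>y. ((\<lambda>l. misner_sharp (r l) (dr l) (Kr l)) has_real_derivative y) (at l) \<and> y \<ge> 0"
    by blast
next
  show "continuous_on {c..b} (\<lambda>l. misner_sharp (r l) (dr l) (Kr l))"
    unfolding misner_sharp_eq by (intro continuous_intros assms) simp
qed fact

lemma last_zero_before_positive:
  fixes g :: "real \<Rightarrow> real"
  assumes "a < b" and cont: "continuous_on {a..b} g" and "g b > 0"
  obtains c where "a \<le> c" "c < b" "c = a \<or> g c = 0" "\<And>x. x \<in> {c<..b} \<Longrightarrow> g x > 0"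
proof (cases "\<forall>x\<in>{a..b}. g x > 0")
  case True
  then show ?thesis using that[of a] \<open>a < b\<close> by auto
next
  case False
  define S where "S = {x \<in> {a..b}. g x \<le> 0}"
  have "S \<noteq> {}" "bdd_above S" using False by (auto simp: S_def not_less)
  moreover have "closed S"
    using continuous_closed_preimage[OF cont closed_atLeastAtMost closed_atMost[of 0]]
    by (simp add: S_def vimage_def Int_def)
  ultimately have c: "Sup S \<in> S" by (rule closed_contains_Sup)
  have above: "g x > 0" if "x \<in> {Sup S<..b}" for x
    using that cSup_upper[OF _ \<open>bdd_above S\<close>, of x] c by (force simp: S_def)
  have "g (Sup S) = 0"
  proof (rule ccontr)
    assume "g (Sup S) \<noteq> 0"
    then have "g (Sup S) < 0" using c by (simp add: S_def)
    then obtain x where "Sup S \<le> x" "x \<le> b" "g x = 0"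
      using IVT'[of g "Sup S" 0 b] \<open>g b > 0\<close> c continuous_on_subset[OF cont]
      by (auto simp: S_def)
    then show False using above[of x] \<open>g (Sup S) < 0\<close> by (cases "x = Sup S") auto
  qed
  then show ?thesis using that[of "Sup S"] c above \<open>g b > 0\<close> by (force simp: S_def)
qed

theorem mainTheorem2:
  fixes l0 :: real
    and r dr ddr Kl Kr dKr mu j :: "real \<Rightarrow> real"
  assumes l0_pos: "l0 > 0"
    and r_smooth: "smooth_on {0..l0} r"
    and Kl_smooth: "smooth_on {0..l0} Kl"
    and Kr_smooth: "smooth_on {0..l0} Kr"
    and r_deriv: "\<And>l. l \<in> {0..l0} \<Longrightarrow> (r has_real_derivative dr l) (at l within {0..l0})"
    and dr_deriv: "\<And>l. l \<in> {0..l0} \<Longrightarrow> (dr has_real_derivative ddr l) (at l within {0..l0})"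
    and Kr_deriv: "\<And>l. l \<in> {0..l0} \<Longrightarrow> (Kr has_real_derivative dKr l) (at l within {0..l0})"
    and r_center: "r 0 = 0"
    and dr_center: "dr 0 = 1"
    and r_pos: "\<And>l. l \<in> {0<..l0} \<Longrightarrow> r l > 0"
    and hamiltonian: "\<And>l. l \<in> {0<..l0} \<Longrightarrow>
          Kr l * (Kr l + 2 * Kl l) - (dr l ^ 2 + 2 * r l * ddr l - 1) / r l ^ 2 = 8 * pi * mu l"
    and momentum: "\<And>l. l \<in> {0<..l0} \<Longrightarrow>
          dKr l + dr l / r l * (Kr l - Kl l) = 4 * pi * j l"
    and dec: "\<And>l. l \<in> {0<..l0} \<Longrightarrow> mu l \<ge> \<bar>j l\<bar>"
    and theta_minus_pos: "theta_minus (r l0) (dr l0) (Kr l0) > 0"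
    and theta_plus_pos: "theta_plus (r l0) (dr l0) (Kr l0) > 0"
  shows "misner_sharp (r l0) (dr l0) (Kr l0) \<ge> 0"
proof -
  have r_l0: "r l0 > 0" using r_pos l0_pos by simp
  have untrapped_l0: "dr l0 > \<bar>Kr l0 * r l0\<bar>"
    using theta_plus_minus_pos_iff[OF r_l0] theta_plus_pos theta_minus_pos by blast
  have cont: "continuous_on {0..l0} r" "continuous_on {0..l0} dr" "continuous_on {0..l0} Kr"
    using DERIV_continuous_on[OF r_deriv] DERIV_continuous_on[OF dr_deriv]
      DERIV_continuous_on[OF Kr_deriv] by auto
  then have "continuous_on {0..l0} (\<lambda>l. dr l - \<bar>Kr l * r l\<bar>)"
    by (intro continuous_intros)
  then obtain c where c: "0 \<le> c" "c < l0" "c = 0 \<or> dr c - \<bar>Kr c * r c\<bar> = 0"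
      and untrapped: "\<And>l. l \<in> {c<..l0} \<Longrightarrow> dr l - \<bar>Kr l * r l\<bar> > 0"
    by (rule last_zero_before_positive[OF l0_pos]) (use untrapped_l0 in auto)
  have "0 \<le> misner_sharp (r c) (dr c) (Kr c)"
  proof (cases "c = 0")
    case True
    then show ?thesis by (simp add: r_center misner_sharp_eq)
  next
    case False
    then show ?thesis
      using c r_pos[of c] by (simp add: misner_sharp_eq_half_radius)
  qed
  also have "\<dots> \<le> misner_sharp (r l0) (dr l0) (Kr l0)"
  proof (rule misner_sharp_nondecreasing[where Kl = Kl and mu = mu and j = j])
    fix l assume l: "l \<in> {c<..<l0}"
    then have "at l within {0..l0} = at l" and "l \<in> {0..l0}" using c by (auto intro: at_within_Icc_at)
    then show "(r has_real_derivative dr l) (at l) \<and> (dr has_real_derivative ddr l) (at l) \<and>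
        (Kr has_real_derivative dKr l) (at l)"
      using r_deriv dr_deriv Kr_deriv by metis
  qed (use c cont untrapped hamiltonian momentum dec r_pos in \<open>auto intro: continuous_on_subset\<close>)
  finally show ?thesis .
qed

end
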